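(* Let $F,G$ be continuous bivariate df's with marginal df's $F_i,G_i$, $i=1,2$, satisfying $\lim_{t\to\infty}\bar F_i(t)/\bar G_i(t)=1$, and assume $\lim_{n\to\infty}F_i^n(nx)=\Phi(x)$ for all $x\in\mathbb{R}$, $i=1,2$. Let $(X_1,X_2)$ have df $F$. Then the following are equivalent: (i) $\lim_{n\to\infty}n\,\mathbb{P}(X_1>nx_1,X_2>nx_2)=0$ for all $x_1,x_2\in(0,\infty)$; (ii) $\lim_{n\to\infty}n\,\mathbb{P}(X_1>n,X_2>n)=0$; (iii) $\lim_{n\to\infty}n\int_{\mathbb{R}^2}G^n(x_1,x_2)\,dF(x_1,x_2)=0$; (iv) $\lim_{n\to\infty}n\int_{\mathbb{R}^2}[1-F(x_1,x_2)]\,dG^n(x_1,x_2)=2$; (v) $\lim_{n\to\infty}n\,\mathbb{P}(G(X_1,X_2)>1-1/n)=0$.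
   Context: $\Phi(x)=e^{-1/x}$ for $x>0$ and $\Phi(x)=0$ for $x\le0$; $\bar F_i=1-F_i$, $\bar G_i=1-G_i$. *)

theory Defs
  imports "HOL-Probability.Probability"
begin

definition Phi :: "real \<Rightarrow> real" where
  "Phi x = (if x > 0 then exp (- 1 / x) else 0)"

definition bdf :: "(real \<times> real) measure \<Rightarrow> real \<times> real \<Rightarrow> real" where
  "bdf M x = measure M ({..fst x} \<times> {..snd x})"

definition marg1 :: "(real \<times> real) measure \<Rightarrow> real \<Rightarrow> real" where
  "marg1 M t = measure M ({..t} \<times> UNIV)"

definition marg2 :: "(real \<times> real) measure \<Rightarrow> real \<Rightarrow> real" where
  "marg2 M t = measure M (UNIV \<times> {..t})"

text \<open>The probability measure with df G^n: law of the componentwise maximum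
  of n independent copies of a random vector with law M.\<close>
definition maxpow :: "(real \<times> real) measure \<Rightarrow> nat \<Rightarrow> (real \<times> real) measure" where
  "maxpow M n = distr (PiM {..<n} (\<lambda>_. M)) borel
     (\<lambda>\<omega>. (MAX i\<in>{..<n}. fst (\<omega> i), MAX i\<in>{..<n}. snd (\<omega> i)))"

end

theory Submission
  imports Defs
begin

text \<open>
  The diagonal tail \<open>t \<mapsto> P(X\<^sub>1 > t, X\<^sub>2 > t)\<close> is monotone, so \<open>n P(X\<^sub>1 > n c, X\<^sub>2 > n c) \<rightarrow> 0\<close>
  for one \<open>c > 0\<close> iff \<open>t P(X\<^sub>1 > t, X\<^sub>2 > t) \<rightarrow> 0\<close> as \<open>t \<rightarrow> \<infinity>\<close>; this gives (i) \<open>\<Leftrightarrow>\<close> (ii).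
  Taking logarithms in \<open>F\<^sub>i\<^sup>n(n x) \<rightarrow> e\<^sup>-\<^sup>1\<^sup>/\<^sup>x\<close> gives \<open>n (1 - F\<^sub>i(n x)) \<rightarrow> 1/x\<close>, and by tail
  equivalence the same holds for \<open>G\<^sub>i\<close>. Since \<open>1 - G\<close> lies between \<open>max\<^sub>i (1 - G\<^sub>i)\<close> and
  \<open>\<Sum>\<^sub>i (1 - G\<^sub>i)\<close>, the level set \<open>{G > 1 - 1/n}\<close> is eventually squeezed between \<open>]4n, \<infinity>[\<^sup>2\<close> and
  \<open>]n/2, \<infinity>[\<^sup>2\<close>, which gives (ii) \<open>\<Leftrightarrow>\<close> (v).

  For \<open>V = G(X) \<in> [0, 1]\<close>, Markov's inequality gives \<open>P(V > 1 - 1/n) \<le> e\<^sup>2 E V\<^sup>n\<close>. Conversely,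
  writing \<open>E (1 - U)\<^sup>n\<close> as a layer-cake integral shows \<open>n E (1 - U)\<^sup>n \<rightarrow> c\<close> whenever
  \<open>P(U \<le> v) \<sim> c v\<close> as \<open>v \<rightarrow> 0\<^sup>+\<close>; with \<open>U = 1 - V\<close> and \<open>c = 0\<close> this gives (iii) \<open>\<Leftrightarrow>\<close> (v).
  Finally, Fubini and inclusion-exclusion give
  \<open>n \<integral> (1 - F) dG\<^sup>n = n E G\<^sub>1\<^sup>n(X\<^sub>1) + n E G\<^sub>2\<^sup>n(X\<^sub>2) - n E G\<^sup>n(X)\<close>, and the same argument,
  applied through the quantile transform of \<open>G\<^sub>i\<close>, sends both marginal terms to \<open>1\<close>; this gives
  (iii) \<open>\<Leftrightarrow>\<close> (iv).
\<close>

section \<open>Scaling limits on the real line\<close>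

lemma filterlim_real_mult_sequentially:
  "c > 0 \<Longrightarrow> filterlim (\<lambda>n::nat. real n * c) at_top sequentially"
  by (rule filterlim_at_top_mult_tendsto_pos[OF tendsto_const _ filterlim_real_sequentially])

lemma mult_tendsto_zero_at_top_of_seq:
  fixes h :: "real \<Rightarrow> real"
  assumes anti: "\<And>s t. 0 < s \<Longrightarrow> s \<le> t \<Longrightarrow> h t \<le> h s" and nonneg: "\<And>t. 0 \<le> h t"
    and c: "c > 0" and lim: "(\<lambda>n::nat. real n * h (real n * c)) \<longlonglongrightarrow> 0"
  shows "((\<lambda>t. t * h t) \<longlongrightarrow> 0) at_top"
proof -
  define N where "N t = nat \<lfloor>t / c\<rfloor>" for t
  have "filterlim (\<lambda>t. t / c) at_top at_top"
    using filterlim_at_top_mult_tendsto_pos[OF tendsto_const[of "1 / c"] _ filterlim_ident] c by simp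
  then have "filterlim N sequentially at_top"
    unfolding N_def
    by (intro filterlim_compose[OF filterlim_nat_sequentially] filterlim_compose[OF filterlim_floor_sequentially])
  then have "((\<lambda>t. 2 * c * (real (N t) * h (real (N t) * c))) \<longlongrightarrow> 2 * c * 0) at_top"
    by (intro tendsto_mult_left filterlim_compose[OF lim])
  then have bound_lim: "((\<lambda>t. 2 * c * (real (N t) * h (real (N t) * c))) \<longlongrightarrow> 0) at_top"
    by simp
  show ?thesis
  proof (rule tendsto_sandwich[OF _ _ tendsto_const bound_lim])
    show "\<forall>\<^sub>F t in at_top. 0 \<le> t * h t"
      using eventually_ge_at_top[of 0] by eventually_elim (simp add: nonneg)
    show "\<forall>\<^sub>F t in at_top. t * h t \<le> 2 * c * (real (N t) * h (real (N t) * c))"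
      using eventually_ge_at_top[of c]
    proof eventually_elim
      case (elim t)
      have "1 \<le> t / c" using elim c by simp
      then have "1 \<le> \<lfloor>t / c\<rfloor>" by simp
      moreover from this have "real (N t) = of_int \<lfloor>t / c\<rfloor>" unfolding N_def by simp
      ultimately have N: "1 \<le> real (N t)" "real (N t) \<le> t / c" "t / c < real (N t) + 1"
        by linarith+
      have "t < c * (real (N t) + 1)" using N c by (simp add: field_simps)
      also have "\<dots> \<le> c * (2 * real (N t))" using N c by (intro mult_left_mono) auto
      finally have "t \<le> 2 * c * real (N t)" by simp
      moreover have "h t \<le> h (real (N t) * c)"
        using N c by (intro anti) (simp_all add: field_simps)
      ultimately have "t * h t \<le> (2 * c * real (N t)) * h (real (N t) * c)"
        using nonneg[of t] c by (intro mult_mono) auto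
      then show ?case by (simp add: algebra_simps)
    qed
  qed
qed

lemma seq_mult_tendsto_zero_of_at_top:
  fixes h :: "real \<Rightarrow> real"
  assumes lim: "((\<lambda>t. t * h t) \<longlongrightarrow> 0) at_top" and c: "c > 0"
  shows "(\<lambda>n::nat. real n * h (real n * c)) \<longlonglongrightarrow> 0"
proof -
  have "(\<lambda>n::nat. (1 / c) * ((real n * c) * h (real n * c))) \<longlonglongrightarrow> (1 / c) * 0"
    by (intro tendsto_mult_left filterlim_compose[OF lim filterlim_real_mult_sequentially[OF c]])
  then show ?thesis using c by simp
qed

lemma exp_le_one_minus_power:
  fixes u :: real assumes "0 \<le> u" "u \<le> 1 / 2"
  shows "exp (- 2 * real n * u) \<le> (1 - u) ^ n"
proof -
  have "exp (- 2 * u) \<le> 1 / (1 + 2 * u)"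
    using exp_ge_add_one_self[of "2 * u"] assms by (simp add: exp_minus field_simps)
  also have "\<dots> \<le> 1 - u"
  proof -
    have "1 \<le> (1 - u) * (1 + 2 * u)"
      using mult_nonneg_nonneg[of u "1 - 2 * u"] assms by (simp add: algebra_simps)
    then show ?thesis using assms by (simp add: divide_le_eq)
  qed
  finally have "exp (- 2 * u) \<le> 1 - u" .
  then have "exp (- 2 * u) ^ n \<le> (1 - u) ^ n" by (intro power_mono) auto
  then show ?thesis by (simp add: exp_of_nat_mult[symmetric] algebra_simps)
qed

lemma mult_neg_ln_le_one_minus:
  fixes p :: real assumes "0 < p"
  shows "p * - ln p \<le> 1 - p"
proof -
  have "ln (1 / p) \<le> 1 / p - 1" using assms by (intro ln_le_minus_one) simp
  then show ?thesis using assms by (simp add: ln_div field_simps)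
qed

text \<open>The bounds \<open>1 - p \<le> - ln p \<le> (1 - p) / p\<close> turn \<open>p\<^sub>n\<^sup>n \<rightarrow> e\<^sup>-\<^sup>1\<^sup>/\<^sup>x\<close>
  into \<open>n (1 - p\<^sub>n) \<rightarrow> 1/x\<close>.\<close>

lemma frechet_domain_tail:
  fixes F :: "real \<Rightarrow> real"
  assumes nonneg: "\<And>t. 0 \<le> F t" and x: "x > 0"
    and lim: "(\<lambda>n::nat. F (real n * x) ^ n) \<longlonglongrightarrow> Phi x"
  shows "(\<lambda>n::nat. real n * (1 - F (real n * x))) \<longlonglongrightarrow> 1 / x"
proof -
  define p where "p n = F (real n * x)" for n :: nat
  define L where "L n = - (real n * ln (p n))" for n :: nat
  have lim': "(\<lambda>n. p n ^ n) \<longlonglongrightarrow> exp (- 1 / x)"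
    using lim x unfolding p_def Phi_def by simp
  have pos: "\<forall>\<^sub>F n in sequentially. 0 < p n ^ n"
    by (rule order_tendstoD(1)[OF lim']) simp
  have p_pos: "\<forall>\<^sub>F n in sequentially. 0 < p n"
    using pos eventually_gt_at_top[of 0]
  proof eventually_elim
    case (elim n)
    then show "0 < p n"
      using nonneg[of "real n * x"] by (cases "p n = 0") (auto simp: p_def zero_power)
  qed
  have "(\<lambda>n. - ln (p n ^ n)) \<longlonglongrightarrow> 1 / x"
    using tendsto_minus[OF tendsto_ln[OF lim']] by simp
  moreover have "\<forall>\<^sub>F n in sequentially. - ln (p n ^ n) = L n"
    using p_pos by eventually_elim (simp add: L_def ln_realpow)
  ultimately have L: "L \<longlonglongrightarrow> 1 / x"
    by (rule Lim_transform_eventually)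
  have "(\<lambda>n. exp (- (L n * (1 / real n)))) \<longlonglongrightarrow> exp (- (1 / x * 0))"
    by (intro tendsto_intros L lim_const_over_n)
  then have "(\<lambda>n. exp (- (L n * (1 / real n)))) \<longlonglongrightarrow> 1" by simp
  moreover have "\<forall>\<^sub>F n in sequentially. exp (- (L n * (1 / real n))) = p n"
    using p_pos eventually_gt_at_top[of 0] by eventually_elim (simp add: L_def)
  ultimately have p1: "p \<longlonglongrightarrow> 1"
    by (rule Lim_transform_eventually)
  show ?thesis
  proof (rule tendsto_sandwich[of "\<lambda>n. p n * L n" _ _ L])
    show "\<forall>\<^sub>F n in sequentially. p n * L n \<le> real n * (1 - F (real n * x))"
      using p_pos
    proof eventually_elim
      case (elim n)
      have "real n * (p n * - ln (p n)) \<le> real n * (1 - p n)"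
        using mult_neg_ln_le_one_minus[OF elim] by (rule mult_left_mono) simp
      then show ?case by (simp add: L_def p_def algebra_simps)
    qed
    show "\<forall>\<^sub>F n in sequentially. real n * (1 - F (real n * x)) \<le> L n"
      using p_pos
    proof eventually_elim
      case (elim n)
      have "real n * (1 - p n) \<le> real n * - ln (p n)"
        using ln_le_minus_one[OF elim] by (intro mult_left_mono) simp_all
      then show ?case by (simp add: L_def p_def)
    qed
  qed (use tendsto_mult[OF p1 L] L in simp_all)
qed

lemma tail_equivalent_seq:
  fixes F G :: "real \<Rightarrow> real"
  assumes ratio: "((\<lambda>t. (1 - F t) / (1 - G t)) \<longlongrightarrow> 1) at_top" and x: "x > 0"
    and lim: "(\<lambda>n::nat. real n * (1 - F (real n * x))) \<longlonglongrightarrow> L"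
  shows "(\<lambda>n::nat. real n * (1 - G (real n * x))) \<longlonglongrightarrow> L"
proof -
  define r where "r n = (1 - F (real n * x)) / (1 - G (real n * x))" for n :: nat
  have r: "r \<longlonglongrightarrow> 1"
    unfolding r_def by (rule filterlim_compose[OF ratio filterlim_real_mult_sequentially[OF x]])
  have "(\<lambda>n. real n * (1 - F (real n * x)) / r n) \<longlonglongrightarrow> L"
    using tendsto_divide[OF lim r] by simp
  moreover have "\<forall>\<^sub>F n in sequentially. real n * (1 - F (real n * x)) / r n = real n * (1 - G (real n * x))"
    using order_tendstoD(1)[OF r zero_less_one] by eventually_elim (auto simp: r_def)
  ultimately show ?thesis
    by (rule Lim_transform_eventually)
qed

section \<open>An Abelian theorem for \<open>n E (1 - U)\<^sup>n\<close>\<close>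

lemma DERIV_neg_one_minus_power:
  "((\<lambda>v::real. - ((1 - v) ^ Suc m)) has_real_derivative real (Suc m) * (1 - v) ^ m) (at v)"
  by (auto intro!: derivative_eq_intros) (cases m, auto simp: algebra_simps)

lemma DERIV_one_minus_power_moment:
  "((\<lambda>v::real. - ((1 - v) ^ Suc m * v) - (1 - v) ^ Suc (Suc m) / real (Suc (Suc m)))
     has_real_derivative real (Suc m) * (1 - v) ^ m * v) (at v)"
  by (rule derivative_eq_intros refl | simp add: power2_eq_square[symmetric] | simp add: power2_eq_square)+

lemma nn_integral_one_minus_power_kernel:
  assumes "0 \<le> s" "s \<le> 1"
  shows "(\<integral>\<^sup>+v. ennreal (real (Suc m) * (1 - v) ^ m) * indicator {s..1} v \<partial>lborel) =
    ennreal ((1 - s) ^ Suc m)"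
  using nn_integral_FTC_Icc[of "\<lambda>v. real (Suc m) * (1 - v) ^ m" s 1 "\<lambda>v. - ((1 - v) ^ Suc m)"]
    DERIV_neg_one_minus_power assms
  by (simp del: power_Suc of_nat_Suc)

lemma nn_integral_one_minus_power_moment_kernel:
  assumes "0 \<le> s" "s \<le> 1" "0 \<le> a"
  shows "(\<integral>\<^sup>+v. ennreal (a * (real (Suc m) * (1 - v) ^ m * v)) * indicator {0..s} v \<partial>lborel) =
    ennreal (a * (1 / real (Suc (Suc m)) - (1 - s) ^ Suc m * s - (1 - s) ^ Suc (Suc m) / real (Suc (Suc m))))"
  using nn_integral_FTC_Icc[of "\<lambda>v. a * (real (Suc m) * (1 - v) ^ m * v)" 0 s
      "\<lambda>v. a * (- ((1 - v) ^ Suc m * v) - (1 - v) ^ Suc (Suc m) / real (Suc (Suc m)))"]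
    DERIV_cmult[OF DERIV_one_minus_power_moment, of a] assms
  by (simp add: algebra_simps)

lemma (in prob_space) integrable_power_unit_interval:
  fixes f :: "'a \<Rightarrow> real"
  assumes [measurable]: "f \<in> borel_measurable M" and "\<And>x. x \<in> space M \<Longrightarrow> 0 \<le> f x \<and> f x \<le> 1"
  shows "integrable M (\<lambda>x. f x ^ n)"
  by (intro integrable_const_bound[where B = 1] AE_I2) (use assms(2) in \<open>auto intro!: power_le_one\<close>)

text \<open>Layer-cake formula: \<open>(1 - u)\<^sup>n = \<integral>\<^sub>u\<^sup>1 n (1 - v)\<^sup>n\<^sup>-\<^sup>1 dv\<close> and Tonelli.\<close>

lemma nn_integral_one_minus_power_layer:
  fixes M :: "'a measure" and U :: "'a \<Rightarrow> real"
  assumes "prob_space M" and [measurable]: "U \<in> borel_measurable M"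
    and U01: "\<And>x. x \<in> space M \<Longrightarrow> 0 \<le> U x \<and> U x \<le> 1"
  shows "(\<integral>\<^sup>+x. ennreal ((1 - U x) ^ Suc m) \<partial>M) =
    (\<integral>\<^sup>+v. ennreal (real (Suc m) * (1 - v) ^ m) * indicator {0..1} v *
       ennreal (measure M {x\<in>space M. U x \<le> v}) \<partial>lborel)"
proof -
  interpret prob_space M by fact
  interpret pair_sigma_finite M lborel
    unfolding pair_sigma_finite_def
    using assms(1) by (auto intro: prob_space_imp_sigma_finite lborel.sigma_finite_measure_axioms)
  define K where "K v = real (Suc m) * (1 - v) ^ m" for v :: real
  define f where "f x v = ennreal (K v) * indicator {0..1} v * (if U x \<le> v then 1 else 0)" for x v
  have f_measurable: "case_prod f \<in> borel_measurable (M \<Otimes>\<^sub>M lborel)"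
    unfolding f_def K_def by measurable
  have "(\<integral>\<^sup>+x. ennreal ((1 - U x) ^ Suc m) \<partial>M) = (\<integral>\<^sup>+x. (\<integral>\<^sup>+v. f x v \<partial>lborel) \<partial>M)"
  proof (rule nn_integral_cong)
    fix x assume x: "x \<in> space M"
    have "(\<integral>\<^sup>+v. ennreal (K v) * indicator {U x..1} v \<partial>lborel) = ennreal ((1 - U x) ^ Suc m)"
      unfolding K_def using U01[OF x] by (intro nn_integral_one_minus_power_kernel) auto
    moreover have "(\<integral>\<^sup>+v. ennreal (K v) * indicator {U x..1} v \<partial>lborel) = (\<integral>\<^sup>+v. f x v \<partial>lborel)"
      using U01[OF x] x by (intro nn_integral_cong) (auto simp: f_def indicator_def)
    ultimately show "ennreal ((1 - U x) ^ Suc m) = (\<integral>\<^sup>+v. f x v \<partial>lborel)" by simp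
  qed
  also have "\<dots> = (\<integral>\<^sup>+v. (\<integral>\<^sup>+x. f x v \<partial>M) \<partial>lborel)"
    by (rule Fubini'[OF f_measurable, symmetric])
  also have "\<dots> = (\<integral>\<^sup>+v. ennreal (K v) * indicator {0..1} v *
       ennreal (measure M {x\<in>space M. U x \<le> v}) \<partial>lborel)"
  proof (rule nn_integral_cong)
    fix v :: real
    have "(\<integral>\<^sup>+x. f x v \<partial>M) =
        (\<integral>\<^sup>+x. (ennreal (K v) * indicator {0..1} v) * indicator {x\<in>space M. U x \<le> v} x \<partial>M)"
      by (intro nn_integral_cong) (auto simp: f_def indicator_def)
    also have "\<dots> = ennreal (K v) * indicator {0..1} v * emeasure M {x\<in>space M. U x \<le> v}"
      by (rule nn_integral_cmult_indicator) measurable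
    finally show "(\<integral>\<^sup>+x. f x v \<partial>M) =
        ennreal (K v) * indicator {0..1} v * ennreal (measure M {x\<in>space M. U x \<le> v})"
      by (simp add: emeasure_eq_measure)
  qed
  finally show ?thesis unfolding K_def .
qed

lemma integral_one_minus_power_layer:
  fixes M :: "'a measure" and U :: "'a \<Rightarrow> real"
  assumes "prob_space M" and [measurable]: "U \<in> borel_measurable M"
    and U01: "\<And>x. x \<in> space M \<Longrightarrow> 0 \<le> U x \<and> U x \<le> 1"
  shows "ennreal (\<integral>x. (1 - U x) ^ Suc m \<partial>M) =
    (\<integral>\<^sup>+v. ennreal (real (Suc m) * (1 - v) ^ m) * indicator {0..1} v *
       ennreal (measure M {x\<in>space M. U x \<le> v}) \<partial>lborel)"
proof -
  interpret prob_space M by fact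
  have "integrable M (\<lambda>x. (1 - U x) ^ Suc m)"
    using U01 by (intro integrable_power_unit_interval) auto
  then have "ennreal (\<integral>x. (1 - U x) ^ Suc m \<partial>M) = (\<integral>\<^sup>+x. ennreal ((1 - U x) ^ Suc m) \<partial>M)"
    using U01 by (intro nn_integral_eq_integral[symmetric] AE_I2) auto
  then show ?thesis using nn_integral_one_minus_power_layer[OF assms] by simp
qed

lemma integral_one_minus_power_le:
  fixes M :: "'a measure" and U :: "'a \<Rightarrow> real"
  assumes M: "prob_space M" and [measurable]: "U \<in> borel_measurable M"
    and U01: "\<And>x. x \<in> space M \<Longrightarrow> 0 \<le> U x \<and> U x \<le> 1"
    and \<delta>: "0 < \<delta>" "\<delta> \<le> 1" and a: "0 \<le> a"
    and le: "\<And>v. 0 \<le> v \<Longrightarrow> v \<le> \<delta> \<Longrightarrow> measure M {x\<in>space M. U x \<le> v} \<le> a * v"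
  shows "(\<integral>x. (1 - U x) ^ Suc m \<partial>M) \<le> a / real (Suc (Suc m)) + (1 - \<delta>) ^ Suc m"
proof -
  interpret prob_space M by fact
  define K where "K v = real (Suc m) * (1 - v) ^ m" for v :: real
  define q where "q v = measure M {x\<in>space M. U x \<le> v}" for v
  have K: "0 \<le> v \<Longrightarrow> v \<le> 1 \<Longrightarrow> 0 \<le> K v" for v unfolding K_def by simp
  have "ennreal (\<integral>x. (1 - U x) ^ Suc m \<partial>M) =
      (\<integral>\<^sup>+v. ennreal (K v) * indicator {0..1} v * ennreal (q v) \<partial>lborel)"
    unfolding K_def q_def by (rule integral_one_minus_power_layer[OF M _ U01]) simp
  also have "\<dots> \<le> (\<integral>\<^sup>+v. ennreal (a * (K v * v)) * indicator {0..1} v +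
      ennreal (K v) * indicator {\<delta>..1} v \<partial>lborel)"
  proof (intro nn_integral_mono)
    fix v :: real
    show "ennreal (K v) * indicator {0..1} v * ennreal (q v) \<le>
        ennreal (a * (K v * v)) * indicator {0..1} v + ennreal (K v) * indicator {\<delta>..1} v"
    proof (cases "0 \<le> v \<and> v \<le> 1")
      case True
      have q: "0 \<le> q v" "q v \<le> 1" unfolding q_def by auto
      show ?thesis
      proof (cases "v \<le> \<delta>")
        case vd: True
        have "K v * q v \<le> K v * (a * v)"
          using le[of v] True vd K[of v] unfolding q_def by (intro mult_left_mono) auto
        then have "ennreal (K v * q v) \<le> ennreal (a * (K v * v))"
          by (intro ennreal_leI) (simp add: algebra_simps)
        then show ?thesis using True K[of v] q by (simp add: ennreal_mult[symmetric] add_increasing2)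
      next
        case vd: False
        have "ennreal (K v * q v) \<le> ennreal (K v)"
          using K[of v] True q by (intro ennreal_leI) (simp add: mult_left_le)
        then show ?thesis using True vd K[of v] q by (simp add: ennreal_mult[symmetric] add_increasing)
      qed
    qed simp
  qed
  also have "\<dots> = (\<integral>\<^sup>+v. ennreal (a * (K v * v)) * indicator {0..1} v \<partial>lborel) +
      (\<integral>\<^sup>+v. ennreal (K v) * indicator {\<delta>..1} v \<partial>lborel)"
    by (rule nn_integral_add) (auto simp: K_def)
  also have "(\<integral>\<^sup>+v. ennreal (a * (K v * v)) * indicator {0..1} v \<partial>lborel) =
      ennreal (a / real (Suc (Suc m)))"
    using nn_integral_one_minus_power_moment_kernel[of 1 a m] a by (simp add: K_def)
  also have "(\<integral>\<^sup>+v. ennreal (K v) * indicator {\<delta>..1} v \<partial>lborel) = ennreal ((1 - \<delta>) ^ Suc m)"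
    unfolding K_def using \<delta> by (intro nn_integral_one_minus_power_kernel) auto
  finally show ?thesis
    using a \<delta> by (simp add: ennreal_plus[symmetric] del: ennreal_plus)
qed

lemma integral_one_minus_power_ge:
  fixes M :: "'a measure" and U :: "'a \<Rightarrow> real"
  assumes M: "prob_space M" and [measurable]: "U \<in> borel_measurable M"
    and U01: "\<And>x. x \<in> space M \<Longrightarrow> 0 \<le> U x \<and> U x \<le> 1"
    and \<delta>: "0 < \<delta>" "\<delta> \<le> 1" and b: "0 \<le> b"
    and ge: "\<And>v. 0 \<le> v \<Longrightarrow> v \<le> \<delta> \<Longrightarrow> b * v \<le> measure M {x\<in>space M. U x \<le> v}"
  shows "b * (1 / real (Suc (Suc m)) - (1 - \<delta>) ^ Suc m * \<delta> - (1 - \<delta>) ^ Suc (Suc m) / real (Suc (Suc m)))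
    \<le> (\<integral>x. (1 - U x) ^ Suc m \<partial>M)"
proof -
  interpret prob_space M by fact
  define K where "K v = real (Suc m) * (1 - v) ^ m" for v :: real
  define q where "q v = measure M {x\<in>space M. U x \<le> v}" for v
  have K: "0 \<le> v \<Longrightarrow> v \<le> 1 \<Longrightarrow> 0 \<le> K v" for v unfolding K_def by simp
  have "ennreal (b * (1 / real (Suc (Suc m)) - (1 - \<delta>) ^ Suc m * \<delta> -
      (1 - \<delta>) ^ Suc (Suc m) / real (Suc (Suc m)))) =
      (\<integral>\<^sup>+v. ennreal (b * (K v * v)) * indicator {0..\<delta>} v \<partial>lborel)"
    unfolding K_def using \<delta> b by (intro nn_integral_one_minus_power_moment_kernel[symmetric]) auto
  also have "\<dots> \<le> (\<integral>\<^sup>+v. ennreal (K v) * indicator {0..1} v * ennreal (q v) \<partial>lborel)"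
  proof (intro nn_integral_mono)
    fix v :: real
    show "ennreal (b * (K v * v)) * indicator {0..\<delta>} v \<le> ennreal (K v) * indicator {0..1} v * ennreal (q v)"
    proof (cases "0 \<le> v \<and> v \<le> \<delta>")
      case True
      have "K v * (b * v) \<le> K v * q v"
        using ge[of v] True K[of v] \<delta> unfolding q_def by (intro mult_left_mono) auto
      then have "ennreal (b * (K v * v)) \<le> ennreal (K v * q v)"
        by (intro ennreal_leI) (simp add: algebra_simps)
      then show ?thesis using True K[of v] \<delta> by (simp add: ennreal_mult[symmetric] q_def)
    qed simp
  qed
  also have "\<dots> = ennreal (\<integral>x. (1 - U x) ^ Suc m \<partial>M)"
    unfolding K_def q_def by (rule integral_one_minus_power_layer[OF M _ U01, symmetric]) simp
  finally show ?thesis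
    using U01 by (subst (asm) ennreal_le_iff) (auto intro!: integral_nonneg_AE AE_I2)
qed

lemma one_minus_power_upper_bound_tendsto:
  fixes \<delta> :: real assumes "0 < \<delta>" "\<delta> \<le> 1"
  shows "(\<lambda>m. real (Suc m) * (a / real (Suc (Suc m)) + (1 - \<delta>) ^ Suc m)) \<longlonglongrightarrow> a"
proof -
  have "(\<lambda>m. a * (real (Suc m) / real (Suc (Suc m))) + real (Suc m) * (1 - \<delta>) ^ Suc m) \<longlonglongrightarrow> a * 1 + 0"
    using LIMSEQ_Suc[OF LIMSEQ_n_over_Suc_n] LIMSEQ_Suc[OF powser_times_n_limit_0[of "1 - \<delta>"]] assms
    by (intro tendsto_intros) simp_all
  then show ?thesis by (simp add: field_simps)
qed

lemma one_minus_power_lower_bound_tendsto: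
  fixes \<delta> :: real assumes "0 < \<delta>" "\<delta> \<le> 1"
  shows "(\<lambda>m. real (Suc m) * (b * (1 / real (Suc (Suc m)) - (1 - \<delta>) ^ Suc m * \<delta> -
    (1 - \<delta>) ^ Suc (Suc m) / real (Suc (Suc m))))) \<longlonglongrightarrow> b"
proof -
  have "(\<lambda>m. b * (real (Suc m) / real (Suc (Suc m)) - (real (Suc m) * (1 - \<delta>) ^ Suc m) * \<delta> -
      real (Suc m) / real (Suc (Suc m)) * (1 - \<delta>) ^ Suc (Suc m))) \<longlonglongrightarrow> b * (1 - 0 * \<delta> - 1 * 0)"
    using LIMSEQ_Suc[OF LIMSEQ_n_over_Suc_n] LIMSEQ_Suc[OF powser_times_n_limit_0[of "1 - \<delta>"]]
      LIMSEQ_Suc[OF LIMSEQ_Suc[OF LIMSEQ_power_zero[of "1 - \<delta>"]]] assms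
    by (intro tendsto_intros) simp_all
  then show ?thesis by (simp add: field_simps)
qed

lemma eventually_mult_integral_one_minus_power_bounds:
  fixes M :: "'a measure" and U :: "'a \<Rightarrow> real"
  assumes M: "prob_space M" and U_measurable [measurable]: "U \<in> borel_measurable M"
    and U01: "\<And>x. x \<in> space M \<Longrightarrow> 0 \<le> U x \<and> U x \<le> 1"
    and \<delta>: "0 < \<delta>" "\<delta> \<le> 1" and ab: "0 \<le> b" "0 \<le> a" and e: "0 < e"
    and bounds: "\<And>v. 0 \<le> v \<Longrightarrow> v \<le> \<delta> \<Longrightarrow>
      b * v \<le> measure M {x\<in>space M. U x \<le> v} \<and> measure M {x\<in>space M. U x \<le> v} \<le> a * v"
  shows "\<forall>\<^sub>F n in sequentially.
    b - e < real n * (\<integral>x. (1 - U x) ^ n \<partial>M) \<and> real n * (\<integral>x. (1 - U x) ^ n \<partial>M) < a + e"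
proof -
  have lower: "b * v \<le> measure M {x\<in>space M. U x \<le> v}"
    and upper: "measure M {x\<in>space M. U x \<le> v} \<le> a * v" if "0 \<le> v" "v \<le> \<delta>" for v
    using bounds[OF that] by simp_all
  have "\<forall>\<^sub>F m in sequentially. b - e < real (Suc m) * (b * (1 / real (Suc (Suc m)) -
      (1 - \<delta>) ^ Suc m * \<delta> - (1 - \<delta>) ^ Suc (Suc m) / real (Suc (Suc m))))"
    using e by (intro order_tendstoD(1)[OF one_minus_power_lower_bound_tendsto[OF \<delta>]]) simp
  moreover have "\<forall>\<^sub>F m in sequentially. real (Suc m) * (a / real (Suc (Suc m)) + (1 - \<delta>) ^ Suc m) < a + e"
    using e by (intro order_tendstoD(2)[OF one_minus_power_upper_bound_tendsto[OF \<delta>]]) simp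
  ultimately have "\<forall>\<^sub>F m in sequentially. b - e < real (Suc m) * (\<integral>x. (1 - U x) ^ Suc m \<partial>M) \<and>
      real (Suc m) * (\<integral>x. (1 - U x) ^ Suc m \<partial>M) < a + e"
  proof eventually_elim
    case (elim m)
    have "(\<integral>x. (1 - U x) ^ Suc m \<partial>M) \<le> a / real (Suc (Suc m)) + (1 - \<delta>) ^ Suc m"
      by (rule integral_one_minus_power_le[OF M U_measurable U01 \<delta> ab(2) upper])
    then have "real (Suc m) * (\<integral>x. (1 - U x) ^ Suc m \<partial>M) \<le>
        real (Suc m) * (a / real (Suc (Suc m)) + (1 - \<delta>) ^ Suc m)"
      by (rule mult_left_mono) simp
    moreover have "b * (1 / real (Suc (Suc m)) - (1 - \<delta>) ^ Suc m * \<delta> -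
        (1 - \<delta>) ^ Suc (Suc m) / real (Suc (Suc m))) \<le> (\<integral>x. (1 - U x) ^ Suc m \<partial>M)"
      by (rule integral_one_minus_power_ge[OF M U_measurable U01 \<delta> ab(1) lower])
    then have "real (Suc m) * (b * (1 / real (Suc (Suc m)) - (1 - \<delta>) ^ Suc m * \<delta> -
        (1 - \<delta>) ^ Suc (Suc m) / real (Suc (Suc m)))) \<le> real (Suc m) * (\<integral>x. (1 - U x) ^ Suc m \<partial>M)"
      by (rule mult_left_mono) simp
    ultimately show ?case using elim by linarith
  qed
  then show ?thesis by (simp only: eventually_sequentially_Suc[symmetric, where P = "\<lambda>n.
      b - e < real n * (\<integral>x. (1 - U x) ^ n \<partial>M) \<and> real n * (\<integral>x. (1 - U x) ^ n \<partial>M) < a + e"])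
qed

lemma linear_bounds_of_tendsto_div_at_right_0:
  fixes q :: "real \<Rightarrow> real"
  assumes mono: "mono q" and nonneg: "\<And>v. 0 \<le> q v"
    and lim: "((\<lambda>v. q v / v) \<longlongrightarrow> c) (at_right 0)" and e: "0 < e"
  shows "0 \<le> c"
    and "\<exists>\<delta>>0. \<delta> \<le> 1 \<and> (\<forall>v. 0 \<le> v \<and> v \<le> \<delta> \<longrightarrow> max 0 (c - e) * v \<le> q v \<and> q v \<le> (c + e) * v)"
proof -
  have "\<forall>\<^sub>F v in at_right 0. 0 \<le> q v / v"
    using eventually_at_right_less[of 0] by eventually_elim (simp add: nonneg)
  then show c: "0 \<le> c"
    by (rule tendsto_lowerbound[OF lim]) simp
  have "((\<lambda>v. v * (q v / v)) \<longlongrightarrow> 0 * c) (at_right 0)"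
    using lim by (intro tendsto_intros) (simp add: tendsto_ident_at)
  then have "((\<lambda>v. v * (q v / v)) \<longlongrightarrow> 0) (at_right 0)" by simp
  moreover have "\<forall>\<^sub>F v in at_right 0. v * (q v / v) = q v"
    using eventually_at_right_less[of 0] by eventually_elim simp
  ultimately have "(q \<longlongrightarrow> 0) (at_right 0)"
    by (rule Lim_transform_eventually)
  moreover have "\<forall>\<^sub>F v in at_right 0. q 0 \<le> q v"
    using eventually_at_right_less[of 0] by eventually_elim (simp add: monoD[OF mono])
  ultimately have "q 0 \<le> 0"
    by (rule tendsto_lowerbound) simp
  then have q0: "q 0 = 0"
    using nonneg[of 0] by simp
  obtain d where d: "0 < d" and close: "\<And>v. 0 < v \<Longrightarrow> v < d \<Longrightarrow> \<bar>q v / v - c\<bar> < e"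
    using tendsto_iff[THEN iffD1, OF lim, rule_format, of e] e
    by (auto simp: eventually_at_right_field dist_real_def)
  have "max 0 (c - e) * v \<le> q v \<and> q v \<le> (c + e) * v" if "0 \<le> v" "v \<le> min 1 (d / 2)" for v
  proof (cases "v = 0")
    case False
    then have "\<bar>q v / v - c\<bar> < e" using that d by (intro close) auto
    then have "(c - e) * v \<le> q v" "q v \<le> (c + e) * v"
      unfolding abs_less_iff using that False by (auto simp: field_simps)
    then show ?thesis using that nonneg[of v] by (auto simp: max_def)
  qed (simp add: q0)
  then show "\<exists>\<delta>>0. \<delta> \<le> 1 \<and> (\<forall>v. 0 \<le> v \<and> v \<le> \<delta> \<longrightarrow> max 0 (c - e) * v \<le> q v \<and> q v \<le> (c + e) * v)"
    using d by (intro exI[of _ "min 1 (d / 2)"]) auto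
qed

lemma mult_integral_one_minus_power_tendsto:
  fixes M :: "'a measure" and U :: "'a \<Rightarrow> real"
  assumes M: "prob_space M" and U_measurable [measurable]: "U \<in> borel_measurable M"
    and U01: "\<And>x. x \<in> space M \<Longrightarrow> 0 \<le> U x \<and> U x \<le> 1"
    and lim: "((\<lambda>v. measure M {x\<in>space M. U x \<le> v} / v) \<longlongrightarrow> c) (at_right 0)"
  shows "(\<lambda>n. real n * (\<integral>x. (1 - U x) ^ n \<partial>M)) \<longlonglongrightarrow> c"
  unfolding tendsto_iff
proof (intro allI impI)
  interpret prob_space M by fact
  fix e :: real assume e: "0 < e"
  have q: "mono (\<lambda>v. measure M {x\<in>space M. U x \<le> v})" "0 \<le> measure M {x\<in>space M. U x \<le> v}" for v
    by (auto intro!: monoI finite_measure_mono)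
  obtain \<delta> where \<delta>: "0 < \<delta>" "\<delta> \<le> 1" and bounds: "\<And>v. 0 \<le> v \<Longrightarrow> v \<le> \<delta> \<Longrightarrow>
      max 0 (c - e / 2) * v \<le> measure M {x\<in>space M. U x \<le> v} \<and>
      measure M {x\<in>space M. U x \<le> v} \<le> (c + e / 2) * v"
    using linear_bounds_of_tendsto_div_at_right_0(2)[OF q lim, of "e / 2"] e by auto
  have "0 \<le> c" using linear_bounds_of_tendsto_div_at_right_0(1)[OF q lim e] .
  then have "\<forall>\<^sub>F n in sequentially. max 0 (c - e / 2) - e / 2 < real n * (\<integral>x. (1 - U x) ^ n \<partial>M) \<and>
      real n * (\<integral>x. (1 - U x) ^ n \<partial>M) < (c + e / 2) + e / 2"
    using e bounds by (intro eventually_mult_integral_one_minus_power_bounds[OF M U_measurable U01 \<delta>]) auto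
  then show "\<forall>\<^sub>F n in sequentially. dist (real n * (\<integral>x. (1 - U x) ^ n \<partial>M)) c < e"
    by eventually_elim (auto simp: dist_real_def abs_less_iff)
qed

section \<open>Quantile transform and power moments\<close>

lemma continuous_cdf_upper_level_set:
  fixes G :: "real \<Rightarrow> real"
  assumes cont: "continuous_on UNIV G" and mono: "mono G"
    and bot: "(G \<longlongrightarrow> 0) at_bot" and top: "(G \<longlongrightarrow> 1) at_top" and v: "0 < v" "v < 1"
  obtains \<tau> where "G \<tau> = 1 - v" and "{t. 1 - v \<le> G t} = {\<tau>..}"
proof -
  define S where "S = {t. 1 - v \<le> G t}"
  obtain t0 where "1 - v < G t0"
    using order_tendstoD(1)[OF top, of "1 - v"] v by (auto simp: eventually_at_top_linorder)
  then have "S \<noteq> {}" by (auto simp: S_def intro!: exI[of _ t0])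
  obtain B where B: "\<And>t. t \<le> B \<Longrightarrow> G t < 1 - v"
    using order_tendstoD(2)[OF bot, of "1 - v"] v by (auto simp: eventually_at_bot_linorder)
  have "B \<le> s" if "s \<in> S" for s
    using B[of s] that by (cases "s \<le> B") (auto simp: S_def)
  then have "bdd_below S" by (rule bdd_belowI)
  moreover have "closed S"
    unfolding S_def by (intro closed_Collect_le continuous_on_const cont)
  ultimately have \<tau>: "Inf S \<in> S" using \<open>S \<noteq> {}\<close> by (rule closed_contains_Inf[rotated])
  have below: "G t < 1 - v" if "t < Inf S" for t
    using cInf_lower[OF _ \<open>bdd_below S\<close>, of t] that by (force simp: S_def)
  have "G (Inf S) \<le> 1 - v"
  proof (rule tendsto_upperbound)
    show "(G \<longlongrightarrow> G (Inf S)) (at_left (Inf S))"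
      using cont by (auto simp: continuous_on_def intro: filterlim_at_split[THEN iffD1, THEN conjunct1])
    show "\<forall>\<^sub>F t in at_left (Inf S). G t \<le> 1 - v"
      unfolding eventually_at_left_field using below less_imp_le by (intro exI[of _ "Inf S - 1"]) auto
  qed simp
  moreover have "S = {Inf S..}"
  proof (intro set_eqI iffI)
    fix t assume "t \<in> {Inf S..}"
    then show "t \<in> S" using \<tau> mono by (auto simp: S_def mono_def intro: order_trans)
  qed (use below in \<open>force simp: S_def not_less[symmetric]\<close>)
  ultimately show thesis using \<tau> by (intro that[of "Inf S"]) (auto simp: S_def)
qed

lemma cdf_bounded:
  fixes G :: "real \<Rightarrow> real"
  assumes mono: "mono G" and bot: "(G \<longlongrightarrow> 0) at_bot" and top: "(G \<longlongrightarrow> 1) at_top"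
  shows "0 \<le> G t" and "G t \<le> 1"
proof -
  have "\<forall>\<^sub>F s in at_bot. G s \<le> G t"
    using eventually_le_at_bot[of t] by eventually_elim (rule monoD[OF mono])
  then show "0 \<le> G t" by (rule tendsto_upperbound[OF bot]) simp
  have "\<forall>\<^sub>F s in at_top. G t \<le> G s"
    using eventually_ge_at_top[of t] by eventually_elim (rule monoD[OF mono])
  then show "G t \<le> 1" by (rule tendsto_lowerbound[OF top]) simp
qed

lemma less_one_of_tail_ratio:
  fixes F G :: "real \<Rightarrow> real"
  assumes mono: "mono G" and le_one: "\<And>t. G t \<le> 1"
    and ratio: "((\<lambda>t. (1 - F t) / (1 - G t)) \<longlongrightarrow> 1) at_top"
  shows "G t < 1"
proof (rule ccontr)
  assume "\<not> G t < 1"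
  then have "G s = 1" if "t \<le> s" for s
    using le_one[of s] monoD[OF mono that] by linarith
  then have "\<forall>\<^sub>F s in at_top. (1 - F s) / (1 - G s) = 0"
    unfolding eventually_at_top_linorder by auto
  then have "((\<lambda>t. (1 - F t) / (1 - G t)) \<longlongrightarrow> 0) at_top"
    by (rule tendsto_eventually)
  then show False using tendsto_unique[OF _ ratio] by force
qed

lemma continuous_cdf_quantile:
  fixes G :: "real \<Rightarrow> real"
  assumes cont: "continuous_on UNIV G" and mono: "mono G"
    and bot: "(G \<longlongrightarrow> 0) at_bot" and top: "(G \<longlongrightarrow> 1) at_top" and less_one: "\<And>t. G t < 1"
  obtains \<tau> where "\<And>v. 0 < v \<Longrightarrow> v < 1 \<Longrightarrow> G (\<tau> v) = 1 - v"
    and "\<And>v. 0 < v \<Longrightarrow> v < 1 \<Longrightarrow> {t. 1 - v \<le> G t} = {\<tau> v..}"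
    and "filterlim \<tau> at_top (at_right 0)"
proof -
  have "\<exists>\<tau>. G \<tau> = 1 - v \<and> {t. 1 - v \<le> G t} = {\<tau>..}" if "v \<in> {0<..<1}" for v
    using continuous_cdf_upper_level_set[OF cont mono bot top, of v] that by auto
  then have "\<forall>v\<in>{0<..<1}. \<exists>\<tau>. G \<tau> = 1 - v \<and> {t. 1 - v \<le> G t} = {\<tau>..}" ..
  then obtain \<tau> where "\<forall>v\<in>{0<..<1}. G (\<tau> v) = 1 - v \<and> {t. 1 - v \<le> G t} = {\<tau> v..}"
    by (rule bchoice[THEN exE])
  then have \<tau>: "G (\<tau> v) = 1 - v" "{t. 1 - v \<le> G t} = {\<tau> v..}" if "0 < v" "v < 1" for v
    using that by auto
  have "\<forall>\<^sub>F v in at_right 0. Z \<le> \<tau> v" for Z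
    unfolding eventually_at_right_field
  proof (intro exI[of _ "min 1 (1 - G Z)"] conjI allI impI)
    show "0 < min 1 (1 - G Z)" using less_one[of Z] by simp
    fix v :: real assume v: "0 < v" "v < min 1 (1 - G Z)"
    show "Z \<le> \<tau> v"
    proof (rule ccontr)
      assume "\<not> Z \<le> \<tau> v"
      then have "G (\<tau> v) \<le> G Z" by (intro monoD[OF mono]) simp
      then show False using \<tau>[of v] v by simp
    qed
  qed
  then show thesis using \<tau> by (intro that) (auto simp: filterlim_at_top)
qed

text \<open>If \<open>X\<close> has a continuous df \<open>F\<^sub>X\<close> tail-equivalent to a continuous df \<open>G\<close>, then
  \<open>P(G(X) \<ge> 1 - v) = 1 - F\<^sub>X(\<tau>\<^sub>v) \<sim> 1 - G(\<tau>\<^sub>v) = v\<close> for the lower \<open>(1 - v)\<close>-quantile \<open>\<tau>\<^sub>v\<close> of \<open>G\<close>.\<close>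

lemma mult_integral_cdf_power_tendsto_one:
  fixes F :: "'a measure" and X :: "'a \<Rightarrow> real" and FX G :: "real \<Rightarrow> real"
  assumes F: "prob_space F" and X_measurable [measurable]: "X \<in> borel_measurable F"
    and law: "\<And>t. measure F {x\<in>space F. X x < t} = FX t"
    and cont: "continuous_on UNIV G" and mono: "mono G"
    and bot: "(G \<longlongrightarrow> 0) at_bot" and top: "(G \<longlongrightarrow> 1) at_top"
    and ratio: "((\<lambda>t. (1 - FX t) / (1 - G t)) \<longlongrightarrow> 1) at_top"
  shows "(\<lambda>n. real n * (\<integral>x. G (X x) ^ n \<partial>F)) \<longlonglongrightarrow> 1"
proof -
  interpret prob_space F by fact
  have [measurable]: "G \<in> borel_measurable borel"
    by (rule borel_measurable_continuous_onI[OF cont])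
  note G01 = cdf_bounded[OF mono bot top]
  obtain \<tau> where \<tau>: "\<And>v. 0 < v \<Longrightarrow> v < 1 \<Longrightarrow> G (\<tau> v) = 1 - v"
      "\<And>v. 0 < v \<Longrightarrow> v < 1 \<Longrightarrow> {t. 1 - v \<le> G t} = {\<tau> v..}"
    and \<tau>_at_top: "filterlim \<tau> at_top (at_right 0)"
    using continuous_cdf_quantile[OF cont mono bot top less_one_of_tail_ratio[OF mono G01(2) ratio]]
    by blast
  have "\<forall>\<^sub>F v in at_right 0. (1 - FX (\<tau> v)) / (1 - G (\<tau> v)) =
      measure F {x\<in>space F. 1 - G (X x) \<le> v} / v"
    unfolding eventually_at_right_field
  proof (intro exI[of _ 1] conjI allI impI)
    fix v :: real assume v: "0 < v" "v < 1"
    have "1 - G y \<le> v \<longleftrightarrow> y \<in> {t. 1 - v \<le> G t}" for y by auto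
    then have "{x\<in>space F. 1 - G (X x) \<le> v} = {x\<in>space F. \<tau> v \<le> X x}"
      unfolding \<tau>(2)[OF v] by simp
    also have "\<dots> = space F - {x\<in>space F. X x < \<tau> v}"
      by auto
    finally have "measure F {x\<in>space F. 1 - G (X x) \<le> v} = 1 - FX (\<tau> v)"
      using prob_compl[of "{x\<in>space F. X x < \<tau> v}"] law by simp
    then show "(1 - FX (\<tau> v)) / (1 - G (\<tau> v)) = measure F {x\<in>space F. 1 - G (X x) \<le> v} / v"
      using \<tau>(1)[OF v] by simp
  qed simp
  with filterlim_compose[OF ratio \<tau>_at_top]
  have "((\<lambda>v. measure F {x\<in>space F. 1 - G (X x) \<le> v} / v) \<longlongrightarrow> 1) (at_right 0)"
    by (rule Lim_transform_eventually)
  then have "(\<lambda>n. real n * (\<integral>x. (1 - (1 - G (X x))) ^ n \<partial>F)) \<longlonglongrightarrow> 1"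
    using G01 by (intro mult_integral_one_minus_power_tendsto[OF F]) auto
  then show ?thesis by simp
qed

lemma measure_power_level_le_integral:
  fixes M :: "'a measure" and V :: "'a \<Rightarrow> real"
  assumes M: "prob_space M" and V_measurable [measurable]: "V \<in> borel_measurable M"
    and V01: "\<And>x. x \<in> space M \<Longrightarrow> 0 \<le> V x \<and> V x \<le> 1" and n: "n \<ge> 2"
  shows "measure M {x\<in>space M. V x > 1 - 1 / real n} \<le> exp 2 * (\<integral>x. V x ^ n \<partial>M)"
proof -
  interpret prob_space M by fact
  define c where "c = (1 - 1 / real n) ^ n"
  have u: "0 \<le> 1 / real n" "1 / real n \<le> 1 / 2" using n by (auto simp: field_simps)
  then have "exp (- 2) \<le> c"
    using exp_le_one_minus_power[OF u, of n] n by (simp add: c_def)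
  moreover have c0: "0 < c"
    using calculation by (meson exp_gt_zero less_le_trans)
  ultimately have "1 / c \<le> 1 / exp (- 2)"
    by (intro divide_left_mono) auto
  then have c: "1 / c \<le> exp 2"
    by (simp add: exp_minus divide_inverse)
  have "{x\<in>space M. V x > 1 - 1 / real n} \<subseteq> {x\<in>space M. c \<le> V x ^ n}"
    using u unfolding c_def by (auto intro: power_mono)
  then have "measure M {x\<in>space M. V x > 1 - 1 / real n} \<le> measure M {x\<in>space M. c \<le> V x ^ n}"
    by (intro finite_measure_mono) auto
  also have "\<dots> \<le> (\<integral>x. V x ^ n \<partial>M) / c"
    using V01 c0
    by (intro integral_Markov_inequality_measure[where A = "space M"] integrable_power_unit_interval) auto
  also have "\<dots> \<le> exp 2 * (\<integral>x. V x ^ n \<partial>M)"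
  proof -
    have "0 \<le> (\<integral>x. V x ^ n \<partial>M)"
      using V01 by (intro integral_nonneg_AE AE_I2) auto
    then have "1 / c * (\<integral>x. V x ^ n \<partial>M) \<le> exp 2 * (\<integral>x. V x ^ n \<partial>M)"
      using c by (intro mult_right_mono) auto
    then show ?thesis by simp
  qed
  finally show ?thesis .
qed

lemma div_tendsto_zero_at_right_0_of_seq:
  fixes q h :: "real \<Rightarrow> real"
  assumes anti: "\<And>s t. 0 < s \<Longrightarrow> s \<le> t \<Longrightarrow> h t \<le> h s" and nonneg: "\<And>t. 0 \<le> h t"
    and lim: "(\<lambda>n::nat. real n * h (real n)) \<longlonglongrightarrow> 0"
    and q: "\<And>v. 0 < v \<Longrightarrow> 0 \<le> q v \<and> q v \<le> h (1 / (2 * v))"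
  shows "((\<lambda>v. q v / v) \<longlongrightarrow> 0) (at_right 0)"
proof -
  have h_lim: "((\<lambda>t. t * h t) \<longlongrightarrow> 0) at_top"
    using lim by (intro mult_tendsto_zero_at_top_of_seq[where c = 1] anti nonneg) simp_all
  have "filterlim (\<lambda>v. inverse v * (1 / 2)) at_top (at_right (0::real))"
    by (intro filterlim_at_top_mult_tendsto_pos[OF tendsto_const _ filterlim_inverse_at_top_right]) simp
  moreover have "(\<lambda>v::real. inverse v * (1 / 2)) = (\<lambda>v. 1 / (2 * v))"
    by (rule ext) (simp add: field_simps)
  ultimately have "filterlim (\<lambda>v. 1 / (2 * v)) at_top (at_right (0::real))"
    by (simp only:)
  from filterlim_compose[OF h_lim this]
  have "((\<lambda>v. 2 * (1 / (2 * v) * h (1 / (2 * v)))) \<longlongrightarrow> 0) (at_right 0)"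
    by (rule tendsto_mult_right_zero)
  moreover have "\<forall>\<^sub>F v in at_right 0. 2 * (1 / (2 * v) * h (1 / (2 * v))) = h (1 / (2 * v)) / v"
    using eventually_at_right_less[of 0] by eventually_elim simp
  ultimately have bound: "((\<lambda>v. h (1 / (2 * v)) / v) \<longlongrightarrow> 0) (at_right 0)"
    by (rule Lim_transform_eventually)
  show ?thesis
  proof (rule tendsto_sandwich[OF _ _ tendsto_const bound])
    show "\<forall>\<^sub>F v in at_right 0. 0 \<le> q v / v"
      using eventually_at_right_less[of 0] by eventually_elim (simp add: q)
    show "\<forall>\<^sub>F v in at_right 0. q v / v \<le> h (1 / (2 * v)) / v"
      using eventually_at_right_less[of 0] by eventually_elim (simp add: q divide_right_mono)
  qed
qed

lemma mult_integral_power_tendsto_zero_iff: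
  fixes M :: "'a measure" and V :: "'a \<Rightarrow> real"
  assumes M: "prob_space M" and V_measurable [measurable]: "V \<in> borel_measurable M"
    and V01: "\<And>x. x \<in> space M \<Longrightarrow> 0 \<le> V x \<and> V x \<le> 1"
  shows "(\<lambda>n. real n * (\<integral>x. V x ^ n \<partial>M)) \<longlonglongrightarrow> 0 \<longleftrightarrow>
    (\<lambda>n. real n * measure M {x\<in>space M. V x > 1 - 1 / real n}) \<longlonglongrightarrow> 0"
proof
  interpret prob_space M by fact
  assume lim: "(\<lambda>n. real n * (\<integral>x. V x ^ n \<partial>M)) \<longlonglongrightarrow> 0"
  have upper: "\<forall>\<^sub>F n in sequentially. real n * measure M {x\<in>space M. V x > 1 - 1 / real n}
      \<le> real n * (exp 2 * (\<integral>x. V x ^ n \<partial>M))"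
    using eventually_ge_at_top[of 2] by eventually_elim
      (intro mult_left_mono measure_power_level_le_integral[OF M V_measurable V01], simp_all)
  have bound: "(\<lambda>n. real n * (exp 2 * (\<integral>x. V x ^ n \<partial>M))) \<longlonglongrightarrow> 0"
    using tendsto_mult_left[OF lim, of "exp 2"] by (simp add: ac_simps)
  show "(\<lambda>n. real n * measure M {x\<in>space M. V x > 1 - 1 / real n}) \<longlonglongrightarrow> 0"
    by (rule tendsto_sandwich[OF _ upper tendsto_const bound]) simp
next
  interpret prob_space M by fact
  assume lim: "(\<lambda>n. real n * measure M {x\<in>space M. V x > 1 - 1 / real n}) \<longlonglongrightarrow> 0"
  have "((\<lambda>v. measure M {x\<in>space M. 1 - V x \<le> v} / v) \<longlongrightarrow> 0) (at_right 0)"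
  proof (rule div_tendsto_zero_at_right_0_of_seq[OF _ _ lim])
    show "measure M {x\<in>space M. V x > 1 - 1 / t} \<le> measure M {x\<in>space M. V x > 1 - 1 / s}"
      if "0 < s" "s \<le> t" for s t
    proof -
      have "1 / t \<le> 1 / s" using that by (intro divide_left_mono) auto
      then show ?thesis by (intro finite_measure_mono) auto
    qed
    show "0 \<le> measure M {x\<in>space M. 1 - V x \<le> v} \<and>
        measure M {x\<in>space M. 1 - V x \<le> v} \<le> measure M {x\<in>space M. V x > 1 - 1 / (1 / (2 * v))}"
      if "0 < v" for v
      using that by (auto intro!: finite_measure_mono)
  qed simp
  then have "(\<lambda>n. real n * (\<integral>x. (1 - (1 - V x)) ^ n \<partial>M)) \<longlonglongrightarrow> 0"
    using V01 by (intro mult_integral_one_minus_power_tendsto[OF M]) auto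
  then show "(\<lambda>n. real n * (\<integral>x. V x ^ n \<partial>M)) \<longlonglongrightarrow> 0" by simp
qed

section \<open>Bivariate distribution functions\<close>

locale bivariate_distribution =
  fixes M :: "(real \<times> real) measure"
  assumes prob_space_M: "prob_space M" and sets_M: "sets M = sets borel"
begin

sublocale prob_space M by (rule prob_space_M)

lemma space_M [simp]: "space M = UNIV"
  using sets_eq_imp_space_eq[OF sets_M] by simp

lemma fst_measurable [measurable]: "fst \<in> borel_measurable M"
  and snd_measurable [measurable]: "snd \<in> borel_measurable M"
  by (simp_all add: measurable_cong_sets[OF sets_M refl] borel_measurable_continuous_onI
      continuous_on_fst continuous_on_snd continuous_on_id)

lemma Times_in_borel [intro, simp]:
  "(A :: real set) \<in> sets borel \<Longrightarrow> (B :: real set) \<in> sets borel \<Longrightarrow>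
    A \<times> B \<in> sets (borel :: (real \<times> real) measure)"
  unfolding borel_prod[symmetric] by (rule pair_measureI)

lemma borel_in_events [intro, simp]: "A \<in> sets borel \<Longrightarrow> A \<in> events"
  using sets_M by simp

lemma prob_Compl: "A \<in> sets borel \<Longrightarrow> prob (- A) = 1 - prob A"
  using prob_compl[of A] by (simp add: Compl_eq_Diff_UNIV)

lemma prob_mono: "A \<in> sets borel \<Longrightarrow> B \<in> sets borel \<Longrightarrow> A \<subseteq> B \<Longrightarrow> prob A \<le> prob B"
  by (intro finite_measure_mono) auto

lemma bdf_nonneg: "0 \<le> bdf M x" and bdf_le_one: "bdf M x \<le> 1"
  and marg1_nonneg: "0 \<le> marg1 M t" and marg1_le_one: "marg1 M t \<le> 1"
  and marg2_nonneg: "0 \<le> marg2 M t" and marg2_le_one: "marg2 M t \<le> 1"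
  by (simp_all add: bdf_def marg1_def marg2_def)

lemma bdf_le_marg1: "bdf M x \<le> marg1 M (fst x)"
  and bdf_le_marg2: "bdf M x \<le> marg2 M (snd x)"
  by (auto simp: bdf_def marg1_def marg2_def intro!: prob_mono)

lemma marg1_mono: "s \<le> t \<Longrightarrow> marg1 M s \<le> marg1 M t"
  and marg2_mono: "s \<le> t \<Longrightarrow> marg2 M s \<le> marg2 M t"
  by (auto simp: marg1_def marg2_def intro!: prob_mono)

lemma mono_marg1: "mono (marg1 M)" and mono_marg2: "mono (marg2 M)"
  by (auto intro: monoI marg1_mono marg2_mono)

lemma one_minus_bdf_le: "1 - bdf M (a, b) \<le> (1 - marg1 M a) + (1 - marg2 M b)"
proof -
  have "1 - bdf M (a, b) = prob (- ({..a} \<times> {..b}))"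
    unfolding bdf_def by (subst prob_Compl) auto
  also have "\<dots> \<le> prob (- ({..a} \<times> UNIV) \<union> - (UNIV \<times> {..b}))"
    by (intro prob_mono) (auto intro!: borel_comp)
  also have "\<dots> \<le> prob (- ({..a} \<times> UNIV)) + prob (- (UNIV \<times> {..b}))"
    by (intro measure_Un_le) (auto intro!: borel_comp)
  also have "\<dots> = (1 - marg1 M a) + (1 - marg2 M b)"
    unfolding marg1_def marg2_def by (subst prob_Compl, simp)+ simp
  finally show ?thesis .
qed

lemma marg1_minus_bdf_le: "marg1 M a - bdf M (a, b) \<le> 1 - marg2 M b"
proof -
  have "marg1 M a - bdf M (a, b) = prob ({..a} \<times> UNIV - {..a} \<times> {..b})"
    unfolding marg1_def bdf_def by (subst finite_measure_Diff) auto
  also have "\<dots> \<le> prob (- (UNIV \<times> {..b}))" by (intro prob_mono) (auto intro!: borel_comp)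
  finally show ?thesis unfolding marg2_def by (subst (asm) prob_Compl) auto
qed

lemma marg2_minus_bdf_le: "marg2 M b - bdf M (a, b) \<le> 1 - marg1 M a"
proof -
  have "marg2 M b - bdf M (a, b) = prob (UNIV \<times> {..b} - {..a} \<times> {..b})"
    unfolding marg2_def bdf_def by (subst finite_measure_Diff) auto
  also have "\<dots> \<le> prob (- ({..a} \<times> UNIV))" by (intro prob_mono) (auto intro!: borel_comp)
  finally show ?thesis unfolding marg1_def by (subst (asm) prob_Compl) auto
qed

lemma marg1_eq_cdf: "marg1 M = cdf (distr M borel fst)"
  and marg2_eq_cdf: "marg2 M = cdf (distr M borel snd)"
  by (auto simp: marg1_def marg2_def cdf_def measure_distr vimage_fst vimage_snd)

lemma real_distribution_fst: "real_distribution (distr M borel fst)"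
  and real_distribution_snd: "real_distribution (distr M borel snd)"
  by (simp_all add: real_distribution_def real_distribution_axioms_def prob_space_distr)

lemma marg1_at_top: "(marg1 M \<longlongrightarrow> 1) at_top"
  and marg2_at_top: "(marg2 M \<longlongrightarrow> 1) at_top"
  and marg1_at_bot: "(marg1 M \<longlongrightarrow> 0) at_bot"
  and marg2_at_bot: "(marg2 M \<longlongrightarrow> 0) at_bot"
  unfolding marg1_eq_cdf marg2_eq_cdf
  by (simp_all add: real_distribution.cdf_lim_at_top_prob
      real_distribution.finite_borel_measure_M[THEN finite_borel_measure.cdf_lim_at_bot]
      real_distribution_fst real_distribution_snd)

end

locale continuous_bivariate_distribution = bivariate_distribution +
  assumes continuous_bdf: "continuous_on UNIV (bdf M)"
begin

lemma continuous_marg1: "continuous_on UNIV (marg1 M)"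
  unfolding continuous_on_iff
proof (intro ballI allI impI)
  fix a e :: real assume e: "0 < e"
  obtain b where b: "1 - e / 3 < marg2 M b"
    using order_tendstoD(1)[OF marg2_at_top, of "1 - e / 3"] e
    by (auto simp: eventually_at_top_linorder)
  have "continuous_on UNIV (\<lambda>x. bdf M (x, b))"
    by (rule continuous_on_compose2[OF continuous_bdf]) (auto intro: continuous_intros)
  then obtain d where d: "d > 0" "\<And>x. dist x a < d \<Longrightarrow> dist (bdf M (x, b)) (bdf M (a, b)) < e / 3"
    using e unfolding continuous_on_iff by (metis UNIV_I divide_pos_pos zero_less_numeral)
  show "\<exists>d>0. \<forall>x\<in>UNIV. dist x a < d \<longrightarrow> dist (marg1 M x) (marg1 M a) < e"
  proof (intro exI conjI ballI impI)
    fix x assume "dist x a < d"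
    then show "dist (marg1 M x) (marg1 M a) < e"
      using d(2)[of x] b marg1_minus_bdf_le[of x b] marg1_minus_bdf_le[of a b]
        bdf_le_marg1[of "(x, b)"] bdf_le_marg1[of "(a, b)"]
      by (auto simp: dist_real_def abs_if split: if_splits)
  qed (rule d)
qed

lemma continuous_marg2: "continuous_on UNIV (marg2 M)"
  unfolding continuous_on_iff
proof (intro ballI allI impI)
  fix a e :: real assume e: "0 < e"
  obtain b where b: "1 - e / 3 < marg1 M b"
    using order_tendstoD(1)[OF marg1_at_top, of "1 - e / 3"] e
    by (auto simp: eventually_at_top_linorder)
  have "continuous_on UNIV (\<lambda>x. bdf M (b, x))"
    by (rule continuous_on_compose2[OF continuous_bdf]) (auto intro: continuous_intros)
  then obtain d where d: "d > 0" "\<And>x. dist x a < d \<Longrightarrow> dist (bdf M (b, x)) (bdf M (b, a)) < e / 3"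
    using e unfolding continuous_on_iff by (metis UNIV_I divide_pos_pos zero_less_numeral)
  show "\<exists>d>0. \<forall>x\<in>UNIV. dist x a < d \<longrightarrow> dist (marg2 M x) (marg2 M a) < e"
  proof (intro exI conjI ballI impI)
    fix x assume "dist x a < d"
    then show "dist (marg2 M x) (marg2 M a) < e"
      using d(2)[of x] b marg2_minus_bdf_le[of x b] marg2_minus_bdf_le[of a b]
        bdf_le_marg2[of "(b, x)"] bdf_le_marg2[of "(b, a)"]
      by (auto simp: dist_real_def abs_if split: if_splits)
  qed (rule d)
qed

lemma prob_lessThan_Times_lessThan: "prob ({..<a} \<times> {..<b}) = bdf M (a, b)"
proof (rule antisym)
  show "prob ({..<a} \<times> {..<b}) \<le> bdf M (a, b)"
    unfolding bdf_def by (intro prob_mono) auto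
  have "((\<lambda>h. bdf M (a - h, b - h)) \<longlongrightarrow> bdf M (a - 0, b - 0)) (at_right 0)"
    by (intro continuous_on_tendsto_compose[OF continuous_bdf] tendsto_intros) auto
  moreover have "\<forall>\<^sub>F h in at_right 0. bdf M (a - h, b - h) \<le> prob ({..<a} \<times> {..<b})"
    using eventually_at_right_less[of "0::real"]
    by eventually_elim (auto simp: bdf_def intro!: prob_mono)
  ultimately show "bdf M (a, b) \<le> prob ({..<a} \<times> {..<b})"
    by (auto intro: tendsto_upperbound)
qed

lemma prob_lessThan_Times_UNIV: "prob ({..<a} \<times> UNIV) = marg1 M a"
proof (rule antisym)
  show "prob ({..<a} \<times> UNIV) \<le> marg1 M a"
    unfolding marg1_def by (intro prob_mono) auto
  have "((\<lambda>h. marg1 M (a - h)) \<longlongrightarrow> marg1 M (a - 0)) (at_right 0)"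
    by (intro continuous_on_tendsto_compose[OF continuous_marg1] tendsto_intros) auto
  moreover have "\<forall>\<^sub>F h in at_right 0. marg1 M (a - h) \<le> prob ({..<a} \<times> UNIV)"
    using eventually_at_right_less[of "0::real"]
    by eventually_elim (auto simp: marg1_def intro!: prob_mono)
  ultimately show "marg1 M a \<le> prob ({..<a} \<times> UNIV)"
    by (auto intro: tendsto_upperbound)
qed

lemma prob_UNIV_Times_lessThan: "prob (UNIV \<times> {..<b}) = marg2 M b"
proof (rule antisym)
  show "prob (UNIV \<times> {..<b}) \<le> marg2 M b"
    unfolding marg2_def by (intro prob_mono) auto
  have "((\<lambda>h. marg2 M (b - h)) \<longlongrightarrow> marg2 M (b - 0)) (at_right 0)"
    by (intro continuous_on_tendsto_compose[OF continuous_marg2] tendsto_intros) auto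
  moreover have "\<forall>\<^sub>F h in at_right 0. marg2 M (b - h) \<le> prob (UNIV \<times> {..<b})"
    using eventually_at_right_less[of "0::real"]
    by eventually_elim (auto simp: marg2_def intro!: prob_mono)
  ultimately show "marg2 M b \<le> prob (UNIV \<times> {..<b})"
    by (auto intro: tendsto_upperbound)
qed

lemma prob_fst_less: "prob {x\<in>space M. fst x < t} = marg1 M t"
  using prob_lessThan_Times_UNIV[of t] by (simp add: vimage_fst[symmetric] vimage_def)

lemma prob_snd_less: "prob {x\<in>space M. snd x < t} = marg2 M t"
  using prob_UNIV_Times_lessThan[of t] by (simp add: vimage_snd[symmetric] vimage_def)

end

context bivariate_distribution
begin

lemma prob_Ioi_Times_Ioi_antimono:
  "s \<le> t \<Longrightarrow> prob ({t<..} \<times> {t<..}) \<le> prob ({s<..} \<times> {s<..})"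
  by (intro prob_mono) auto

lemma diagonal_tail_scale_iff:
  assumes c: "c > 0"
  shows "(\<lambda>n::nat. real n * prob ({real n * c<..} \<times> {real n * c<..})) \<longlonglongrightarrow> 0 \<longleftrightarrow>
    (\<lambda>n::nat. real n * prob ({real n<..} \<times> {real n<..})) \<longlonglongrightarrow> 0"
proof
  assume "(\<lambda>n::nat. real n * prob ({real n * c<..} \<times> {real n * c<..})) \<longlonglongrightarrow> 0"
  then have "((\<lambda>t. t * prob ({t<..} \<times> {t<..})) \<longlongrightarrow> 0) at_top"
    using c by (intro mult_tendsto_zero_at_top_of_seq prob_Ioi_Times_Ioi_antimono) auto
  from seq_mult_tendsto_zero_of_at_top[OF this, of 1]
  show "(\<lambda>n::nat. real n * prob ({real n<..} \<times> {real n<..})) \<longlonglongrightarrow> 0" by simp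
next
  assume "(\<lambda>n::nat. real n * prob ({real n<..} \<times> {real n<..})) \<longlonglongrightarrow> 0"
  then have "((\<lambda>t. t * prob ({t<..} \<times> {t<..})) \<longlongrightarrow> 0) at_top"
    by (intro mult_tendsto_zero_at_top_of_seq[where c = 1] prob_Ioi_Times_Ioi_antimono) auto
  from seq_mult_tendsto_zero_of_at_top[OF this c]
  show "(\<lambda>n::nat. real n * prob ({real n * c<..} \<times> {real n * c<..})) \<longlonglongrightarrow> 0" .
qed

lemma joint_tail_scaling_iff:
  "(\<forall>x1 x2. x1 > 0 \<longrightarrow> x2 > 0 \<longrightarrow>
      (\<lambda>n::nat. real n * prob ({real n * x1<..} \<times> {real n * x2<..})) \<longlonglongrightarrow> 0) \<longleftrightarrow>
   (\<lambda>n::nat. real n * prob ({real n<..} \<times> {real n<..})) \<longlonglongrightarrow> 0"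
proof
  assume "\<forall>x1 x2. x1 > 0 \<longrightarrow> x2 > 0 \<longrightarrow>
      (\<lambda>n::nat. real n * prob ({real n * x1<..} \<times> {real n * x2<..})) \<longlonglongrightarrow> 0"
  from this[rule_format, of 1 1]
  show "(\<lambda>n::nat. real n * prob ({real n<..} \<times> {real n<..})) \<longlonglongrightarrow> 0" by simp
next
  assume lim: "(\<lambda>n::nat. real n * prob ({real n<..} \<times> {real n<..})) \<longlonglongrightarrow> 0"
  show "\<forall>x1 x2. x1 > 0 \<longrightarrow> x2 > 0 \<longrightarrow>
      (\<lambda>n::nat. real n * prob ({real n * x1<..} \<times> {real n * x2<..})) \<longlonglongrightarrow> 0"
  proof (intro allI impI)
    fix x1 x2 :: real assume "x1 > 0" "x2 > 0"
    then have m: "min x1 x2 > 0" by simp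
    have bound: "real n * prob ({real n * x1<..} \<times> {real n * x2<..}) \<le>
        real n * prob ({real n * min x1 x2<..} \<times> {real n * min x1 x2<..})" for n :: nat
    proof -
      have "real n * min x1 x2 \<le> real n * x1" "real n * min x1 x2 \<le> real n * x2"
        by (simp_all add: mult_left_mono)
      then show ?thesis by (intro mult_left_mono prob_mono) auto
    qed
    have "(\<lambda>n::nat. real n * prob ({real n * min x1 x2<..} \<times> {real n * min x1 x2<..})) \<longlonglongrightarrow> 0"
      using diagonal_tail_scale_iff[OF m] lim by simp
    then show "(\<lambda>n::nat. real n * prob ({real n * x1<..} \<times> {real n * x2<..})) \<longlonglongrightarrow> 0"
      by (rule tendsto_sandwich[OF always_eventually always_eventually tendsto_const, rotated 2])
        (simp_all add: bound)
  qed
qed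

lemma bdf_gt_subset_Ioi_Times_Ioi:
  assumes "r \<le> 1 - marg1 M s" "r \<le> 1 - marg2 M s"
  shows "{x. bdf M x > 1 - r} \<subseteq> {s<..} \<times> {s<..}"
proof safe
  fix a b assume ab: "bdf M (a, b) > 1 - r"
  show "s < a"
  proof (rule ccontr)
    assume "\<not> s < a"
    then show False using marg1_mono[of a s] bdf_le_marg1[of "(a, b)"] ab assms(1) by simp
  qed
  show "s < b"
  proof (rule ccontr)
    assume "\<not> s < b"
    then show False using marg2_mono[of b s] bdf_le_marg2[of "(a, b)"] ab assms(2) by simp
  qed
qed

lemma Ioi_Times_Ioi_subset_bdf_gt:
  assumes "(1 - marg1 M s) + (1 - marg2 M s) < r"
  shows "{s<..} \<times> {s<..} \<subseteq> {x. bdf M x > 1 - r}"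
proof safe
  fix a b assume "s < a" "s < b"
  then show "bdf M (a, b) > 1 - r"
    using marg1_mono[of s a] marg2_mono[of s b] one_minus_bdf_le[of a b] assms by simp
qed

lemma eventually_bdf_level_subset:
  assumes "(\<lambda>n::nat. real n * (1 - marg1 M (real n * (1/2)))) \<longlonglongrightarrow> 2"
    and "(\<lambda>n::nat. real n * (1 - marg2 M (real n * (1/2)))) \<longlonglongrightarrow> 2"
  shows "\<forall>\<^sub>F n in sequentially.
    {x. bdf M x > 1 - 1 / real n} \<subseteq> {real n * (1/2)<..} \<times> {real n * (1/2)<..}"
proof -
  have "\<forall>\<^sub>F n in sequentially. 1 < real n * (1 - marg1 M (real n * (1/2)))"
    "\<forall>\<^sub>F n in sequentially. 1 < real n * (1 - marg2 M (real n * (1/2)))"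
    using order_tendstoD(1)[OF assms(1)] order_tendstoD(1)[OF assms(2)] by simp_all
  then show ?thesis
  proof eventually_elim
    case (elim n)
    then have "real n > 0" by (cases "n = 0") auto
    then show ?case
      using elim by (intro bdf_gt_subset_Ioi_Times_Ioi) (simp_all add: field_simps)
  qed
qed

lemma eventually_subset_bdf_level:
  assumes "(\<lambda>n::nat. real n * (1 - marg1 M (real n * 4))) \<longlonglongrightarrow> 1/4"
    and "(\<lambda>n::nat. real n * (1 - marg2 M (real n * 4))) \<longlonglongrightarrow> 1/4"
  shows "\<forall>\<^sub>F n in sequentially.
    {real n * 4<..} \<times> {real n * 4<..} \<subseteq> {x. bdf M x > 1 - 1 / real n}"
proof -
  have "(\<lambda>n. real n * (1 - marg1 M (real n * 4)) + real n * (1 - marg2 M (real n * 4))) \<longlonglongrightarrow> 1/4 + 1/4"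
    by (intro tendsto_add assms)
  then have "\<forall>\<^sub>F n in sequentially.
      real n * (1 - marg1 M (real n * 4)) + real n * (1 - marg2 M (real n * 4)) < 1"
    by (rule order_tendstoD(2)) simp
  then show ?thesis
    using eventually_gt_at_top[of 0]
    by eventually_elim (intro Ioi_Times_Ioi_subset_bdf_gt, simp add: field_simps)
qed

lemma componentwise_Max_measurable:
  fixes n :: nat
  shows "(\<lambda>\<omega>. (MAX i\<in>{..<n}. fst (\<omega> i), MAX i\<in>{..<n}. snd (\<omega> i))) \<in> PiM {..<n} (\<lambda>_. M) \<rightarrow>\<^sub>M borel"
  unfolding borel_prod[symmetric] by measurable

lemma prob_space_maxpow: "prob_space (maxpow M n)"
  unfolding maxpow_def
  by (intro prob_space.prob_space_distr prob_space_PiM componentwise_Max_measurable prob_space_M)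

lemma sets_maxpow: "sets (maxpow M n) = sets borel"
  by (simp add: maxpow_def)

lemma measure_maxpow_Times:
  assumes n: "n \<ge> 1" and [measurable]: "A \<in> sets borel" "B \<in> sets borel"
    and Max_A: "\<And>S. finite S \<Longrightarrow> S \<noteq> {} \<Longrightarrow> Max S \<in> A \<longleftrightarrow> S \<subseteq> A"
    and Max_B: "\<And>S. finite S \<Longrightarrow> S \<noteq> {} \<Longrightarrow> Max S \<in> B \<longleftrightarrow> S \<subseteq> B"
  shows "measure (maxpow M n) (A \<times> B) = prob (A \<times> B) ^ n"
proof -
  interpret product_sigma_finite "\<lambda>_. M" by standard
  define mx where "mx \<omega> = (MAX i\<in>{..<n}. fst (\<omega> i), MAX i\<in>{..<n}. snd (\<omega> i))" for \<omega> :: "nat \<Rightarrow> real \<times> real"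
  have "{..<n} \<noteq> {}" using n by (auto simp: lessThan_empty_iff)
  then have mx_iff: "mx \<omega> \<in> A \<times> B \<longleftrightarrow> (\<forall>i<n. \<omega> i \<in> A \<times> B)" for \<omega>
    using Max_A[of "(\<lambda>i. fst (\<omega> i)) ` {..<n}"] Max_B[of "(\<lambda>i. snd (\<omega> i)) ` {..<n}"]
    by (auto simp: mx_def mem_Times_iff)
  have "mx -` (A \<times> B) \<inter> space (PiM {..<n} (\<lambda>_. M)) = PiE {..<n} (\<lambda>_. A \<times> B)"
    by (simp add: set_eq_iff space_PiM PiE_iff mx_iff) blast
  moreover have mx_measurable: "mx \<in> PiM {..<n} (\<lambda>_. M) \<rightarrow>\<^sub>M borel"
    unfolding mx_def by (rule componentwise_Max_measurable)
  ultimately have "measure (maxpow M n) (A \<times> B) = measure (PiM {..<n} (\<lambda>_. M)) (PiE {..<n} (\<lambda>_. A \<times> B))"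
    unfolding maxpow_def mx_def[abs_def, symmetric] by (simp add: measure_distr)
  also have "\<dots> = prob (A \<times> B) ^ n"
  proof (rule measure_eq_emeasure_eq_ennreal)
    have "emeasure (PiM {..<n} (\<lambda>_. M)) (PiE {..<n} (\<lambda>_. A \<times> B)) = (\<Prod>i<n. emeasure M (A \<times> B))"
      by (intro emeasure_PiM) auto
    then show "emeasure (PiM {..<n} (\<lambda>_. M)) (PiE {..<n} (\<lambda>_. A \<times> B)) = ennreal (prob (A \<times> B) ^ n)"
      by (simp add: emeasure_eq_measure ennreal_power)
  qed simp
  finally show ?thesis .
qed

end

context continuous_bivariate_distribution
begin

lemma measure_maxpow_lessThan:
  assumes "n \<ge> 1"
  shows "measure (maxpow M n) ({..<a} \<times> {..<b}) = bdf M (a, b) ^ n"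
    and "measure (maxpow M n) ({..<a} \<times> UNIV) = marg1 M a ^ n"
    and "measure (maxpow M n) (UNIV \<times> {..<b}) = marg2 M b ^ n"
  using measure_maxpow_Times[OF assms, of "{..<a}" "{..<b}"] measure_maxpow_Times[OF assms, of "{..<a}" UNIV]
    measure_maxpow_Times[OF assms, of UNIV "{..<b}"]
    prob_lessThan_Times_lessThan prob_lessThan_Times_UNIV prob_UNIV_Times_lessThan
  by auto

lemma bdf_gt_in_borel [measurable]:
  "{x. bdf M x > c} \<in> sets borel"
  by (rule borel_open) (intro open_Collect_less continuous_intros continuous_bdf)

end

lemma joint_tail_tendsto_zero_iff_bdf_level:
  assumes F: "bivariate_distribution F" and G: "continuous_bivariate_distribution G"
    and G1: "\<And>x. x > 0 \<Longrightarrow> (\<lambda>n::nat. real n * (1 - marg1 G (real n * x))) \<longlonglongrightarrow> 1 / x"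
    and G2: "\<And>x. x > 0 \<Longrightarrow> (\<lambda>n::nat. real n * (1 - marg2 G (real n * x))) \<longlonglongrightarrow> 1 / x"
  shows "(\<lambda>n::nat. real n * measure F ({real n<..} \<times> {real n<..})) \<longlonglongrightarrow> 0 \<longleftrightarrow>
    (\<lambda>n::nat. real n * measure F {x. bdf G x > 1 - 1 / real n}) \<longlonglongrightarrow> 0"
proof
  interpret F: bivariate_distribution F by (rule F)
  interpret G: continuous_bivariate_distribution G by (rule G)
  assume "(\<lambda>n::nat. real n * measure F ({real n<..} \<times> {real n<..})) \<longlonglongrightarrow> 0"
  then have lim: "(\<lambda>n::nat. real n * measure F ({real n * (1/2)<..} \<times> {real n * (1/2)<..})) \<longlonglongrightarrow> 0"
    using F.diagonal_tail_scale_iff[of "1/2"] by simp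
  have "\<forall>\<^sub>F n in sequentially.
      {x. bdf G x > 1 - 1 / real n} \<subseteq> {real n * (1/2)<..} \<times> {real n * (1/2)<..}"
    using G1[of "1/2"] G2[of "1/2"] by (intro G.eventually_bdf_level_subset) simp_all
  then have "\<forall>\<^sub>F n in sequentially. real n * measure F {x. bdf G x > 1 - 1 / real n}
      \<le> real n * measure F ({real n * (1/2)<..} \<times> {real n * (1/2)<..})"
    by eventually_elim (intro mult_left_mono F.prob_mono, simp_all)
  then show "(\<lambda>n::nat. real n * measure F {x. bdf G x > 1 - 1 / real n}) \<longlonglongrightarrow> 0"
    by (rule tendsto_sandwich[OF _ _ tendsto_const lim, rotated]) simp
next
  interpret F: bivariate_distribution F by (rule F)
  interpret G: continuous_bivariate_distribution G by (rule G)
  assume lim: "(\<lambda>n::nat. real n * measure F {x. bdf G x > 1 - 1 / real n}) \<longlonglongrightarrow> 0"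
  have "\<forall>\<^sub>F n in sequentially.
      {real n * 4<..} \<times> {real n * 4<..} \<subseteq> {x. bdf G x > 1 - 1 / real n}"
    using G1[of 4] G2[of 4] by (intro G.eventually_subset_bdf_level) simp_all
  then have "\<forall>\<^sub>F n in sequentially. real n * measure F ({real n * 4<..} \<times> {real n * 4<..})
      \<le> real n * measure F {x. bdf G x > 1 - 1 / real n}"
    by eventually_elim (intro mult_left_mono F.prob_mono, simp_all)
  then have "(\<lambda>n::nat. real n * measure F ({real n * 4<..} \<times> {real n * 4<..})) \<longlonglongrightarrow> 0"
    by (rule tendsto_sandwich[OF _ _ tendsto_const lim, rotated]) simp
  then show "(\<lambda>n::nat. real n * measure F ({real n<..} \<times> {real n<..})) \<longlonglongrightarrow> 0"
    using F.diagonal_tail_scale_iff[of 4] by simp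
qed

lemma integral_measure_section_swap:
  assumes M: "bivariate_distribution M" and N: "bivariate_distribution N"
    and S: "S \<in> sets (borel :: ((real \<times> real) \<times> (real \<times> real)) measure)"
  shows "(\<integral>m. measure N {x. (m, x) \<in> S} \<partial>M) = (\<integral>x. measure M {m. (m, x) \<in> S} \<partial>N)"
proof -
  interpret M: bivariate_distribution M by (rule M)
  interpret N: bivariate_distribution N by (rule N)
  interpret pair_sigma_finite M N
    unfolding pair_sigma_finite_def by (auto intro: prob_space_imp_sigma_finite M.prob_space_M N.prob_space_M)
  have "sets (M \<Otimes>\<^sub>M N) = sets (borel \<Otimes>\<^sub>M borel)"
    by (rule sets_pair_measure_cong[OF M.sets_M N.sets_M])
  also have "\<dots> = sets (borel :: ((real \<times> real) \<times> (real \<times> real)) measure)"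
    by (subst borel_prod) (rule refl)
  finally have S_sets: "S \<in> sets (M \<Otimes>\<^sub>M N)" using S by simp
  have section1: "Pair m -` S = {x. (m, x) \<in> S}" and section2: "(\<lambda>x. (x, y)) -` S = {m. (m, y) \<in> S}"
    for m y by auto
  have "(\<lambda>m. measure N {x. (m, x) \<in> S}) \<in> borel_measurable M"
    using measurable_emeasure_Pair1[OF S_sets] unfolding section1 measure_def by measurable
  then have int1: "integrable M (\<lambda>m. measure N {x. (m, x) \<in> S})"
    by (intro M.integrable_const_bound[where B = 1]) auto
  have "(\<lambda>y. measure M {m. (m, y) \<in> S}) \<in> borel_measurable N"
    using measurable_emeasure_Pair2[OF S_sets] unfolding section2 measure_def by measurable
  then have int2: "integrable N (\<lambda>y. measure M {m. (m, y) \<in> S})"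
    by (intro N.integrable_const_bound[where B = 1]) auto
  have "ennreal (\<integral>m. measure N {x. (m, x) \<in> S} \<partial>M) = (\<integral>\<^sup>+m. emeasure N (Pair m -` S) \<partial>M)"
    by (simp add: nn_integral_eq_integral[OF int1, symmetric] section1 N.emeasure_eq_measure)
  also have "\<dots> = emeasure (M \<Otimes>\<^sub>M N) S"
    by (rule N.emeasure_pair_measure_alt[OF S_sets, symmetric])
  also have "\<dots> = (\<integral>\<^sup>+y. emeasure M ((\<lambda>x. (x, y)) -` S) \<partial>N)"
    by (rule emeasure_pair_measure_alt2[OF S_sets])
  also have "\<dots> = ennreal (\<integral>y. measure M {m. (m, y) \<in> S} \<partial>N)"
    by (simp add: nn_integral_eq_integral[OF int2, symmetric] section2 M.emeasure_eq_measure)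
  finally show ?thesis
    by (subst (asm) ennreal_inj) (auto intro!: integral_nonneg_AE)
qed

text \<open>\<open>1 - F(m)\<close> is the \<open>F\<close>-probability that \<open>x \<le> m\<close> fails; by Fubini, integrating it against the
  law of the maximum gives the \<open>G\<^sup>n\<close>-probability of \<open>{m. m\<^sub>1 < x\<^sub>1 \<or> m\<^sub>2 < x\<^sub>2}\<close>, integrated against \<open>F\<close>,
  which is expanded by inclusion-exclusion.\<close>

lemma integral_one_minus_bdf_maxpow:
  assumes F: "bivariate_distribution F" and G: "continuous_bivariate_distribution G" and n: "n \<ge> 1"
  shows "(\<integral>m. 1 - bdf F m \<partial>maxpow G n) =
    (\<integral>x. marg1 G (fst x) ^ n \<partial>F) + (\<integral>x. marg2 G (snd x) ^ n \<partial>F) - (\<integral>x. bdf G x ^ n \<partial>F)"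
proof -
  interpret F: bivariate_distribution F by (rule F)
  interpret G: continuous_bivariate_distribution G by (rule G)
  interpret Gn: bivariate_distribution "maxpow G n"
    by (rule bivariate_distribution.intro[OF G.prob_space_maxpow G.sets_maxpow])
  define S :: "((real \<times> real) \<times> (real \<times> real)) set"
    where "S = {p. fst (fst p) < fst (snd p)} \<union> {p. snd (fst p) < snd (snd p)}"
  have "S \<in> sets borel" unfolding S_def
    by (intro sets.Un borel_open open_Collect_less continuous_intros)
  have "(\<integral>m. 1 - bdf F m \<partial>maxpow G n) = (\<integral>m. measure F {x. (m, x) \<in> S} \<partial>maxpow G n)"
  proof (rule Bochner_Integration.integral_cong[OF refl])
    fix m :: "real \<times> real"
    have "{x. (m, x) \<in> S} = - ({..fst m} \<times> {..snd m})" unfolding S_def by auto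
    then show "1 - bdf F m = measure F {x. (m, x) \<in> S}" by (simp add: bdf_def F.prob_Compl)
  qed
  also have "\<dots> = (\<integral>x. measure (maxpow G n) {m. (m, x) \<in> S} \<partial>F)"
    by (rule integral_measure_section_swap[OF Gn.bivariate_distribution_axioms F \<open>S \<in> sets borel\<close>])
  also have "\<dots> = (\<integral>x. marg1 G (fst x) ^ n + marg2 G (snd x) ^ n - bdf G x ^ n \<partial>F)"
  proof (rule Bochner_Integration.integral_cong[OF refl])
    fix x :: "real \<times> real"
    obtain a b where x: "x = (a, b)" by force
    have "{m. (m, x) \<in> S} = {..<a} \<times> UNIV \<union> UNIV \<times> {..<b}" unfolding S_def x by auto
    moreover have "{..<a} \<times> UNIV \<inter> UNIV \<times> {..<b} = {..<a} \<times> {..<b}" by auto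
    ultimately have "measure (maxpow G n) {m. (m, x) \<in> S} = measure (maxpow G n) ({..<a} \<times> UNIV) +
        measure (maxpow G n) (UNIV \<times> {..<b}) - measure (maxpow G n) ({..<a} \<times> {..<b})"
      using measure_Un3[of "{..<a} \<times> UNIV" "maxpow G n" "UNIV \<times> {..<b}"]
      by (simp add: Gn.fmeasurable_eq_sets)
    then show "measure (maxpow G n) {m. (m, x) \<in> S} = marg1 G (fst x) ^ n + marg2 G (snd x) ^ n - bdf G x ^ n"
      using G.measure_maxpow_lessThan[OF n] x by simp
  qed
  also have "\<dots> = (\<integral>x. marg1 G (fst x) ^ n \<partial>F) + (\<integral>x. marg2 G (snd x) ^ n \<partial>F) - (\<integral>x. bdf G x ^ n \<partial>F)"
  proof -
    have [measurable]: "bdf G \<in> borel_measurable borel" "marg1 G \<in> borel_measurable borel"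
        "marg2 G \<in> borel_measurable borel"
      using G.continuous_bdf G.continuous_marg1 G.continuous_marg2
      by (auto intro: borel_measurable_continuous_onI)
    have "integrable F (\<lambda>x. marg1 G (fst x) ^ n)" "integrable F (\<lambda>x. marg2 G (snd x) ^ n)"
      using G.marg1_nonneg G.marg1_le_one G.marg2_nonneg G.marg2_le_one
      by (intro F.integrable_power_unit_interval; simp)+
    moreover have "integrable F (\<lambda>x. bdf G x ^ n)"
      using G.bdf_nonneg G.bdf_le_one
      by (intro F.integrable_power_unit_interval) (simp_all add: measurable_cong_sets[OF F.sets_M refl])
    ultimately show ?thesis by simp
  qed
  finally show ?thesis .
qed

lemma mult_integral_bdf_power_tendsto_zero_iff_maxpow:
  assumes F: "bivariate_distribution F" and G: "continuous_bivariate_distribution G"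
    and lim1: "(\<lambda>n. real n * (\<integral>x. marg1 G (fst x) ^ n \<partial>F)) \<longlonglongrightarrow> 1"
    and lim2: "(\<lambda>n. real n * (\<integral>x. marg2 G (snd x) ^ n \<partial>F)) \<longlonglongrightarrow> 1"
  shows "(\<lambda>n. real n * (\<integral>x. bdf G x ^ n \<partial>F)) \<longlonglongrightarrow> 0 \<longleftrightarrow>
    (\<lambda>n. real n * (\<integral>x. 1 - bdf F x \<partial>maxpow G n)) \<longlonglongrightarrow> 2"
proof -
  have eq: "real n * (\<integral>x. 1 - bdf F x \<partial>maxpow G n) = real n * (\<integral>x. marg1 G (fst x) ^ n \<partial>F) +
      real n * (\<integral>x. marg2 G (snd x) ^ n \<partial>F) - real n * (\<integral>x. bdf G x ^ n \<partial>F)" for n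
  proof (cases "n = 0")
    case False
    then show ?thesis
      by (subst integral_one_minus_bdf_maxpow[OF F G]) (simp_all add: algebra_simps)
  qed simp
  show ?thesis
  proof
    assume "(\<lambda>n. real n * (\<integral>x. bdf G x ^ n \<partial>F)) \<longlonglongrightarrow> 0"
    from tendsto_diff[OF tendsto_add[OF lim1 lim2] this]
    show "(\<lambda>n. real n * (\<integral>x. 1 - bdf F x \<partial>maxpow G n)) \<longlonglongrightarrow> 2" by (simp add: eq)
  next
    assume "(\<lambda>n. real n * (\<integral>x. 1 - bdf F x \<partial>maxpow G n)) \<longlonglongrightarrow> 2"
    from tendsto_diff[OF tendsto_add[OF lim1 lim2] this]
    show "(\<lambda>n. real n * (\<integral>x. bdf G x ^ n \<partial>F)) \<longlonglongrightarrow> 0" by (simp add: eq)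
  qed
qed

theorem proposition3p2:
  fixes F G :: "(real \<times> real) measure"
  assumes F_prob: "prob_space F" and F_sets: "sets F = sets borel"
      and G_prob: "prob_space G" and G_sets: "sets G = sets borel"
      and F_cont: "continuous_on UNIV (bdf F)"
      and G_cont: "continuous_on UNIV (bdf G)"
      and tail1: "((\<lambda>t. (1 - marg1 F t) / (1 - marg1 G t)) \<longlongrightarrow> 1) at_top"
      and tail2: "((\<lambda>t. (1 - marg2 F t) / (1 - marg2 G t)) \<longlongrightarrow> 1) at_top"
      and dom1: "\<And>x. (\<lambda>n::nat. (marg1 F (real n * x)) ^ n) \<longlonglongrightarrow> Phi x"
      and dom2: "\<And>x. (\<lambda>n::nat. (marg2 F (real n * x)) ^ n) \<longlonglongrightarrow> Phi x"
  shows
    "((\<forall>x1 x2. x1 > 0 \<longrightarrow> x2 > 0 \<longrightarrow>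
        (\<lambda>n::nat. real n * measure F ({real n * x1<..} \<times> {real n * x2<..})) \<longlonglongrightarrow> 0)
      \<longleftrightarrow> (\<lambda>n::nat. real n * measure F ({real n<..} \<times> {real n<..})) \<longlonglongrightarrow> 0)
   \<and> ((\<lambda>n::nat. real n * measure F ({real n<..} \<times> {real n<..})) \<longlonglongrightarrow> 0
      \<longleftrightarrow> (\<lambda>n::nat. real n * (\<integral>x. (bdf G x) ^ n \<partial>F)) \<longlonglongrightarrow> 0)
   \<and> ((\<lambda>n::nat. real n * (\<integral>x. (bdf G x) ^ n \<partial>F)) \<longlonglongrightarrow> 0
      \<longleftrightarrow> (\<lambda>n::nat. real n * (\<integral>x. 1 - bdf F x \<partial>(maxpow G n))) \<longlonglongrightarrow> 2)
   \<and> ((\<lambda>n::nat. real n * (\<integral>x. 1 - bdf F x \<partial>(maxpow G n))) \<longlonglongrightarrow> 2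
      \<longleftrightarrow> (\<lambda>n::nat. real n * measure F {x. bdf G x > 1 - 1 / real n}) \<longlonglongrightarrow> 0)"
proof -
  interpret F: continuous_bivariate_distribution F
    by (intro continuous_bivariate_distribution.intro bivariate_distribution.intro
        continuous_bivariate_distribution_axioms.intro F_prob F_sets F_cont)
  interpret G: continuous_bivariate_distribution G
    by (intro continuous_bivariate_distribution.intro bivariate_distribution.intro
        continuous_bivariate_distribution_axioms.intro G_prob G_sets G_cont)
  have G_tail1: "(\<lambda>n::nat. real n * (1 - marg1 G (real n * x))) \<longlonglongrightarrow> 1 / x" if "x > 0" for x
    using frechet_domain_tail[OF F.marg1_nonneg that dom1]
    by (rule tail_equivalent_seq[OF tail1 that])
  have G_tail2: "(\<lambda>n::nat. real n * (1 - marg2 G (real n * x))) \<longlonglongrightarrow> 1 / x" if "x > 0" for x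
    using frechet_domain_tail[OF F.marg2_nonneg that dom2]
    by (rule tail_equivalent_seq[OF tail2 that])
  have "(\<lambda>n. real n * (\<integral>x. marg1 G (fst x) ^ n \<partial>F)) \<longlonglongrightarrow> 1"
    by (rule mult_integral_cdf_power_tendsto_one[OF F_prob F.fst_measurable F.prob_fst_less
          G.continuous_marg1 G.mono_marg1 G.marg1_at_bot G.marg1_at_top tail1])
  moreover have "(\<lambda>n. real n * (\<integral>x. marg2 G (snd x) ^ n \<partial>F)) \<longlonglongrightarrow> 1"
    by (rule mult_integral_cdf_power_tendsto_one[OF F_prob F.snd_measurable F.prob_snd_less
          G.continuous_marg2 G.mono_marg2 G.marg2_at_bot G.marg2_at_top tail2])
  ultimately show ?thesis
    using F.joint_tail_scaling_iff
      joint_tail_tendsto_zero_iff_bdf_level[OF F.bivariate_distribution_axioms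
        G.continuous_bivariate_distribution_axioms G_tail1 G_tail2]
      mult_integral_power_tendsto_zero_iff[OF F_prob, of "bdf G"]
      mult_integral_bdf_power_tendsto_zero_iff_maxpow[OF F.bivariate_distribution_axioms
        G.continuous_bivariate_distribution_axioms]
      G.bdf_nonneg G.bdf_le_one G.continuous_bdf
    by (simp add: measurable_cong_sets[OF F_sets refl] borel_measurable_continuous_onI)
qed

end
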